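(* Let $d\geq1$, $q>1$, $\frac dq<\alpha<d$ and $\delta>0$. Then there exists $C>0$ such that for every $R>0$ and every measurable function $u$ on $\mathbb{R}^d$, $$\int_{\mathbb{R}^d\setminus B_R(0)}\frac{|u(x)|}{|x|^{\alpha-\frac dq+\delta}}\,dx\leq \frac{C}{R^\delta}\left\|\tfrac{1}{|x|^\alpha}\star|u|\right\|_{L^q(\mathbb{R}^d)}$$ and $$\int_{B_R(0)}\frac{|u(x)|}{|x|^{\alpha-\frac dq-\delta}}\,dx\leq C R^{\delta}\left\|\tfrac{1}{|x|^\alpha}\star|u|\right\|_{L^q(\mathbb{R}^d)}.$$
   Context: $B_R(0)$ is the open ball of radius $R$ centered at the origin and $\star$ denotes convolution. *)

theory Defs
  imports "HOL-Analysis.Analysis"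
begin

definition riesz_conv :: "real \<Rightarrow> ('a::euclidean_space \<Rightarrow> real) \<Rightarrow> 'a \<Rightarrow> ennreal" where
  "riesz_conv \<alpha> u x = (\<integral>\<^sup>+ y. ennreal (\<bar>u y\<bar> / norm (x - y) powr \<alpha>) \<partial>lebesgue)"

definition Lq_norm_enn :: "real \<Rightarrow> ('a::euclidean_space \<Rightarrow> ennreal) \<Rightarrow> ennreal" where
  "Lq_norm_enn q f =
     (let I = (\<integral>\<^sup>+ x. (if f x = \<infinity> then \<infinity> else ennreal (enn2real (f x) powr q)) \<partial>lebesgue)
      in if I = \<infinity> then \<infinity> else ennreal (enn2real I powr (1 / q)))"

end

theory Submission
  imports Defs
begin

text \<open>
  Duality against the test function g(y) = |y|^(-\<beta>) on a set A, zero elsewhere. By Tonelli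
  the integral of |u| against |.|^(-\<alpha>) \<star> g equals the integral of g against |.|^(-\<alpha>) \<star> |u|,
  and Hoelder bounds the latter by ||g||_q' ||(|.|^(-\<alpha>) \<star> |u|)||_q. For x in A, g is comparable
  to |x|^(-\<beta>) on a ball of radius comparable to |x| at distance comparable to |x| from x, so
  (|.|^(-\<alpha>) \<star> g)(x) is at least K |x|^(d - \<alpha> - \<beta>). A dyadic decomposition into balls gives
  ||g||_q' <= M R^(d/q' - \<beta>), both for A the complement of B_R(0) with \<beta> q' > d and for
  A = B_R(0) with \<beta> q' < d. The choices \<beta> = d/q' + \<delta> and \<beta> = d/q' - \<delta> turn
  |x|^(\<alpha> + \<beta> - d) into the weights of the theorem and R^(d/q' - \<beta>) into R^(-\<delta>) and R^\<delta>.
\<close>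

lemma nn_integral_mult_eq_0_if_powr_integral_eq_0:
  fixes f :: "'a \<Rightarrow> real" and h :: "'a \<Rightarrow> ennreal"
  assumes "p > 0" and f: "f \<in> borel_measurable M" "\<And>x. f x \<ge> 0"
    and "(\<integral>\<^sup>+x. ennreal (f x powr p) \<partial>M) = 0"
  shows "(\<integral>\<^sup>+x. ennreal (f x) * h x \<partial>M) = 0"
proof -
  have "AE x in M. ennreal (f x powr p) = 0"
    using assms(4) f by (subst (asm) nn_integral_0_iff_AE) auto
  then have "AE x in M. ennreal (f x) * h x = 0"
    by eventually_elim (use f \<open>p > 0\<close> in auto)
  then have "(\<integral>\<^sup>+x. ennreal (f x) * h x \<partial>M) = (\<integral>\<^sup>+x. 0 \<partial>M)"
    by (rule nn_integral_cong_AE)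
  then show ?thesis
    by simp
qed

lemma nn_integral_Holder_pos:
  fixes f h :: "'a \<Rightarrow> real"
  assumes pq: "p > 1" "q > 1" "1/p + 1/q = 1" and "F > 0" "H > 0"
    and f: "f \<in> borel_measurable M" "\<And>x. f x \<ge> 0"
    and h: "h \<in> borel_measurable M" "\<And>x. h x \<ge> 0"
    and F: "(\<integral>\<^sup>+x. ennreal (f x powr p) \<partial>M) \<le> ennreal F"
    and H: "(\<integral>\<^sup>+x. ennreal (h x powr q) \<partial>M) \<le> ennreal H"
  shows "(\<integral>\<^sup>+x. ennreal (f x * h x) \<partial>M) \<le> ennreal (F powr (1/p) * H powr (1/q))"
proof -
  define A B where "A = F powr (1/p)" and "B = H powr (1/q)"
  have AB: "A > 0" "B > 0" "A powr p = F" "B powr q = H"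
    using assms(4,5) pq by (simp_all add: A_def B_def powr_powr)
  have Young: "f x * h x \<le> A * B * (f x powr p / (p * F) + h x powr q / (q * H))" for x
  proof -
    have "(f x / A) * (h x / B) \<le> (f x / A) powr p / p + (h x / B) powr q / q"
      using pq f h AB by (intro Youngs_inequality) auto
    then show ?thesis
      using f h AB by (simp add: powr_divide field_simps)
  qed
  have "(\<integral>\<^sup>+x. ennreal (f x * h x) \<partial>M)
      \<le> (\<integral>\<^sup>+x. ennreal (A * B) * (ennreal (1 / (p * F)) * ennreal (f x powr p)
                                 + ennreal (1 / (q * H)) * ennreal (h x powr q)) \<partial>M)"
    using AB assms(4,5) pq f h
    by (intro nn_integral_mono) (simp add: Young ennreal_leI flip: ennreal_mult ennreal_plus)
  also have "\<dots> = ennreal (A * B) * (ennreal (1 / (p * F)) * (\<integral>\<^sup>+x. ennreal (f x powr p) \<partial>M)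
                                   + ennreal (1 / (q * H)) * (\<integral>\<^sup>+x. ennreal (h x powr q) \<partial>M))"
    using f h by (simp add: nn_integral_add nn_integral_cmult)
  also have "\<dots> \<le> ennreal (A * B) * (ennreal (1 / (p * F)) * ennreal F + ennreal (1 / (q * H)) * ennreal H)"
    using F H by (intro mult_left_mono add_mono) auto
  also have "\<dots> = ennreal (A * B)"
    using assms(4,5) pq by (simp add: ennreal_mult' flip: ennreal_mult ennreal_plus)
  finally show ?thesis
    by (simp add: A_def B_def)
qed

lemma nn_integral_Holder:
  fixes f h :: "'a \<Rightarrow> real"
  assumes pq: "p > 1" "q > 1" "1/p + 1/q = 1"
    and f: "f \<in> borel_measurable M" "\<And>x. f x \<ge> 0"
    and h: "h \<in> borel_measurable M" "\<And>x. h x \<ge> 0"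
    and F: "(\<integral>\<^sup>+x. ennreal (f x powr p) \<partial>M) \<le> ennreal F"
    and H: "(\<integral>\<^sup>+x. ennreal (h x powr q) \<partial>M) \<le> ennreal H"
  shows "(\<integral>\<^sup>+x. ennreal (f x * h x) \<partial>M) \<le> ennreal (F powr (1/p) * H powr (1/q))"
proof -
  have split: "(\<integral>\<^sup>+x. ennreal (f x * h x) \<partial>M) = (\<integral>\<^sup>+x. ennreal (f x) * ennreal (h x) \<partial>M)"
    using f h by (simp add: ennreal_mult)
  consider "(\<integral>\<^sup>+x. ennreal (f x powr p) \<partial>M) = 0" | "(\<integral>\<^sup>+x. ennreal (h x powr q) \<partial>M) = 0"
    | "F > 0" "H > 0"
    using F H by (cases "F \<le> 0"; cases "H \<le> 0") (auto simp: not_le ennreal_neg)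
  then show ?thesis
  proof cases
    case 1
    have "(\<integral>\<^sup>+x. ennreal (f x) * ennreal (h x) \<partial>M) = 0"
      by (rule nn_integral_mult_eq_0_if_powr_integral_eq_0[OF _ f 1]) (use pq in auto)
    then show ?thesis
      using split by simp
  next
    case 2
    have "(\<integral>\<^sup>+x. ennreal (h x) * ennreal (f x) \<partial>M) = 0"
      by (rule nn_integral_mult_eq_0_if_powr_integral_eq_0[OF _ h 2]) (use pq in auto)
    then show ?thesis
      using split by (simp add: mult.commute)
  next
    case 3
    show ?thesis
      by (rule nn_integral_Holder_pos[OF pq 3 f h F H])
  qed
qed

lemma Lq_norm_enn_finiteE:
  fixes v :: "'a::euclidean_space \<Rightarrow> ennreal"
  assumes v: "v \<in> borel_measurable lborel" and finite: "Lq_norm_enn q v \<noteq> \<infinity>"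
  obtains I where "I \<ge> 0" "Lq_norm_enn q v = ennreal (I powr (1/q))" "AE x in lborel. v x \<noteq> \<infinity>"
    "(\<integral>\<^sup>+x. ennreal (enn2real (v x) powr q) \<partial>lborel) = ennreal I"
proof -
  define J where "J = (\<integral>\<^sup>+x. (if v x = \<infinity> then \<infinity> else ennreal (enn2real (v x) powr q)) \<partial>lborel)"
  have norm_v: "Lq_norm_enn q v = (if J = \<infinity> then \<infinity> else ennreal (enn2real J powr (1/q)))"
    unfolding Lq_norm_enn_def J_def by (simp add: nn_integral_completion)
  then have J: "J \<noteq> \<infinity>"
    using finite by auto
  then have "AE x in lborel. (if v x = \<infinity> then \<infinity> else ennreal (enn2real (v x) powr q)) \<noteq> \<infinity>"
    using v unfolding J_def by (intro nn_integral_PInf_AE) auto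
  then have v_finite: "AE x in lborel. v x \<noteq> \<infinity>"
    by eventually_elim (auto split: if_splits)
  show ?thesis
  proof (rule that)
    show "Lq_norm_enn q v = ennreal (enn2real J powr (1/q))"
      using norm_v J by simp
    have "J = (\<integral>\<^sup>+x. ennreal (enn2real (v x) powr q) \<partial>lborel)"
      unfolding J_def by (rule nn_integral_cong_AE) (use v_finite in auto)
    then show "(\<integral>\<^sup>+x. ennreal (enn2real (v x) powr q) \<partial>lborel) = ennreal (enn2real J)"
      using J by (simp add: less_top)
  qed (use v_finite in simp_all)
qed

lemma nn_integral_le_Lq_norm_enn:
  fixes g :: "'a::euclidean_space \<Rightarrow> real" and v :: "'a \<Rightarrow> ennreal"
  assumes q: "q > 1" and g: "g \<in> borel_measurable lborel" "\<And>y. g y \<ge> 0"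
    and v: "v \<in> borel_measurable lborel"
    and G: "(\<integral>\<^sup>+y. ennreal (g y powr (q/(q-1))) \<partial>lborel) \<le> ennreal G"
  shows "(\<integral>\<^sup>+y. ennreal (g y) * v y \<partial>lborel) \<le> ennreal (G powr ((q-1)/q)) * Lq_norm_enn q v"
proof -
  consider "(\<integral>\<^sup>+y. ennreal (g y powr (q/(q-1))) \<partial>lborel) = 0"
    | "Lq_norm_enn q v = \<infinity>" "G > 0" | "Lq_norm_enn q v \<noteq> \<infinity>"
    using G by (cases "G \<le> 0") (auto simp: not_le ennreal_neg)
  then show ?thesis
  proof cases
    case 1
    have "(\<integral>\<^sup>+y. ennreal (g y) * v y \<partial>lborel) = 0"
      by (rule nn_integral_mult_eq_0_if_powr_integral_eq_0[OF _ g 1]) (use q in auto)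
    then show ?thesis
      by simp
  next
    case 2
    then show ?thesis
      by (simp add: ennreal_mult_top)
  next
    case 3
    then obtain I where I: "I \<ge> 0" "Lq_norm_enn q v = ennreal (I powr (1/q))"
      "AE x in lborel. v x \<noteq> \<infinity>" "(\<integral>\<^sup>+x. ennreal (enn2real (v x) powr q) \<partial>lborel) = ennreal I"
      using Lq_norm_enn_finiteE[OF v] by blast
    have "(\<integral>\<^sup>+y. ennreal (g y) * v y \<partial>lborel) = (\<integral>\<^sup>+y. ennreal (g y * enn2real (v y)) \<partial>lborel)"
      by (rule nn_integral_cong_AE) (use I(3) g in \<open>auto simp: ennreal_mult less_top\<close>)
    also have "\<dots> \<le> ennreal (G powr (1 / (q/(q-1))) * I powr (1/q))"
      using q g v G I(4) by (intro nn_integral_Holder[where M = lborel]) (auto simp: field_simps)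
    also have "\<dots> = ennreal (G powr ((q-1)/q)) * Lq_norm_enn q v"
      using I(2) by (simp add: ennreal_mult)
    finally show ?thesis .
  qed
qed

lemma riesz_conv_cong_AE:
  assumes "AE y in lborel. u y = v y"
  shows "riesz_conv \<alpha> u = riesz_conv \<alpha> v"
  unfolding riesz_conv_def nn_integral_completion
  by (intro ext nn_integral_cong_AE) (use assms in auto)

lemma borel_measurable_riesz_conv [measurable]:
  fixes u :: "'a::euclidean_space \<Rightarrow> real"
  assumes [measurable]: "u \<in> borel_measurable lborel"
  shows "riesz_conv \<alpha> u \<in> borel_measurable lborel"
  unfolding riesz_conv_def[abs_def] nn_integral_completion by measurable

lemma nn_integral_riesz_conv_swap:
  fixes u g :: "'a::euclidean_space \<Rightarrow> real"
  assumes [measurable]: "u \<in> borel_measurable lborel" "g \<in> borel_measurable lborel"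
  shows "(\<integral>\<^sup>+x. ennreal \<bar>u x\<bar> * riesz_conv \<alpha> g x \<partial>lborel)
       = (\<integral>\<^sup>+y. ennreal \<bar>g y\<bar> * riesz_conv \<alpha> u y \<partial>lborel)"
proof -
  define F where "F x y = ennreal (\<bar>u x\<bar> * \<bar>g y\<bar> / norm (x - y) powr \<alpha>)" for x y :: 'a
  have [measurable]: "case_prod F \<in> borel_measurable (lborel \<Otimes>\<^sub>M lborel)"
    unfolding F_def by measurable
  have left: "ennreal \<bar>u x\<bar> * riesz_conv \<alpha> g x = (\<integral>\<^sup>+y. F x y \<partial>lborel)" for x
    unfolding riesz_conv_def nn_integral_completion F_def
    by (subst nn_integral_cmult[symmetric]) (auto intro!: nn_integral_cong simp flip: ennreal_mult)
  have right: "ennreal \<bar>g y\<bar> * riesz_conv \<alpha> u y = (\<integral>\<^sup>+x. F x y \<partial>lborel)" for y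
    unfolding riesz_conv_def nn_integral_completion F_def
    by (subst nn_integral_cmult[symmetric])
      (auto intro!: nn_integral_cong simp: norm_minus_commute mult.commute simp flip: ennreal_mult)
  show ?thesis
    unfolding left right
    by (rule pair_sigma_finite.Fubini') (auto simp: pair_sigma_finite_def lborel.sigma_finite_measure_axioms)
qed

lemma weighted_integral_le_Lq_norm_riesz_conv:
  fixes u g w :: "'a::euclidean_space \<Rightarrow> real"
  assumes q: "q > 1" and K: "K > 0"
    and u: "u \<in> borel_measurable lebesgue"
    and g: "g \<in> borel_measurable lborel" "\<And>y. g y \<ge> 0"
    and G: "(\<integral>\<^sup>+y. ennreal (g y powr (q/(q-1))) \<partial>lborel) \<le> ennreal G"
    and w: "\<And>x. w x \<ge> 0" "\<And>x. ennreal (K * w x) \<le> riesz_conv \<alpha> g x"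
  shows "(\<integral>\<^sup>+x. ennreal (\<bar>u x\<bar> * w x) \<partial>lebesgue)
      \<le> ennreal (G powr ((q-1)/q) / K) * Lq_norm_enn q (riesz_conv \<alpha> u)"
proof -
  obtain v where v: "v \<in> borel_measurable lborel" and uv: "AE x in lborel. u x = v x"
    using completion_ex_borel_measurable_real[OF u] by (auto simp: eq_commute)
  have w_le: "ennreal (w x) \<le> ennreal (1/K) * riesz_conv \<alpha> g x" for x
  proof -
    have "ennreal (w x) = ennreal (1/K) * ennreal (K * w x)"
      using K w(1)[of x] by (simp flip: ennreal_mult)
    also have "\<dots> \<le> ennreal (1/K) * riesz_conv \<alpha> g x"
      by (intro mult_left_mono w(2)) simp
    finally show ?thesis .
  qed
  have "(\<integral>\<^sup>+x. ennreal (\<bar>u x\<bar> * w x) \<partial>lebesgue) = (\<integral>\<^sup>+x. ennreal \<bar>v x\<bar> * ennreal (w x) \<partial>lborel)"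
    unfolding nn_integral_completion
    by (rule nn_integral_cong_AE) (use uv w(1) in \<open>auto simp: ennreal_mult\<close>)
  also have "\<dots> \<le> (\<integral>\<^sup>+x. ennreal (1/K) * (ennreal \<bar>v x\<bar> * riesz_conv \<alpha> g x) \<partial>lborel)"
    by (intro nn_integral_mono) (metis mult.left_commute mult_left_mono w_le zero_le)
  also have "\<dots> = ennreal (1/K) * (\<integral>\<^sup>+y. ennreal (g y) * riesz_conv \<alpha> v y \<partial>lborel)"
    using nn_integral_riesz_conv_swap[OF v g(1), of \<alpha>] g(2) v g(1)
    by (simp add: nn_integral_cmult)
  also have "\<dots> \<le> ennreal (1/K) * (ennreal (G powr ((q-1)/q)) * Lq_norm_enn q (riesz_conv \<alpha> v))"
    using q g G v by (intro mult_left_mono nn_integral_le_Lq_norm_enn) auto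
  also have "\<dots> = ennreal (G powr ((q-1)/q) / K) * Lq_norm_enn q (riesz_conv \<alpha> u)"
  proof -
    have "ennreal (G powr ((q-1)/q) / K) = ennreal (1/K) * ennreal (G powr ((q-1)/q))"
      using K by (simp add: ennreal_mult[symmetric])
    then show ?thesis
      using riesz_conv_cong_AE[OF uv, of \<alpha>] by (simp add: mult.assoc)
  qed
  finally show ?thesis .
qed

lemma riesz_weighted_bound_from_test_function:
  fixes A :: "'a::euclidean_space set" and u :: "'a \<Rightarrow> real" and q K G \<alpha> \<beta> :: real
  assumes q: "q > 1" and K: "K > 0" and A: "A \<in> sets borel"
    and u: "u \<in> borel_measurable lebesgue"
    and G: "(\<integral>\<^sup>+y\<in>A. ennreal (norm y powr - (\<beta> * (q/(q-1)))) \<partial>lborel) \<le> ennreal G"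
    and lower: "\<And>x. x \<in> A \<Longrightarrow> x \<noteq> 0 \<Longrightarrow>
      ennreal (K * norm x powr (DIM('a) - \<beta> - \<alpha>)) \<le> riesz_conv \<alpha> (\<lambda>y. indicator A y * norm y powr - \<beta>) x"
  shows "(\<integral>\<^sup>+x\<in>A. ennreal (\<bar>u x\<bar> / norm x powr (\<alpha> + \<beta> - DIM('a))) \<partial>lebesgue)
      \<le> ennreal (G powr ((q-1)/q) / K) * Lq_norm_enn q (riesz_conv \<alpha> u)"
proof -
  define g :: "'a \<Rightarrow> real" where "g = (\<lambda>y. indicator A y * norm y powr - \<beta>)"
  define w :: "'a \<Rightarrow> real" where "w = (\<lambda>x. indicator A x / norm x powr (\<alpha> + \<beta> - DIM('a)))"
  have "(\<integral>\<^sup>+y. ennreal (g y powr (q/(q-1))) \<partial>lborel)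
      = (\<integral>\<^sup>+y\<in>A. ennreal (norm y powr - (\<beta> * (q/(q-1)))) \<partial>lborel)"
    by (intro nn_integral_cong) (simp add: g_def indicator_def powr_powr)
  then have g_powr: "(\<integral>\<^sup>+y. ennreal (g y powr (q/(q-1))) \<partial>lborel) \<le> ennreal G"
    using G by simp
  \<comment> \<open>No lower bound is needed at \<open>x = 0\<close>, where \<open>w\<close> evaluates to \<open>1 / 0 = 0\<close>.\<close>
  have w_le: "ennreal (K * w x) \<le> riesz_conv \<alpha> g x" for x
  proof (cases "x \<in> A \<and> x \<noteq> 0")
    case True
    have "- (\<alpha> + \<beta> - DIM('a)) = DIM('a) - \<beta> - \<alpha>"
      by simp
    then have "K * w x = K * norm x powr (DIM('a) - \<beta> - \<alpha>)"
      using True unfolding w_def by (metis indicator_simps(1) powr_minus_divide)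
    then show ?thesis
      using lower[of x] True by (simp only: g_def simp_thms)
  qed (auto simp: w_def)
  have "(\<integral>\<^sup>+x\<in>A. ennreal (\<bar>u x\<bar> / norm x powr (\<alpha> + \<beta> - DIM('a))) \<partial>lebesgue)
      = (\<integral>\<^sup>+x. ennreal (\<bar>u x\<bar> * w x) \<partial>lebesgue)"
    by (intro nn_integral_cong) (simp add: w_def indicator_def)
  also have "\<dots> \<le> ennreal (G powr ((q-1)/q) / K) * Lq_norm_enn q (riesz_conv \<alpha> u)"
    using q K u A g_powr w_le by (intro weighted_integral_le_Lq_norm_riesz_conv) (auto simp: g_def w_def)
  finally show ?thesis .
qed

lemma riesz_weighted_bound_from_test_functions:
  fixes A :: "real \<Rightarrow> 'a::euclidean_space set" and q K M \<alpha> \<beta> \<gamma> :: real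
  assumes q: "q > 1" and K: "K > 0" and M: "M > 0" and A: "\<And>R. A R \<in> sets borel"
    and G: "\<And>R. R > 0 \<Longrightarrow>
      (\<integral>\<^sup>+y\<in>A R. ennreal (norm y powr - (\<beta> * (q/(q-1)))) \<partial>lborel) \<le> ennreal (M * R powr \<gamma>)"
    and lower: "\<And>R x. x \<in> A R \<Longrightarrow> x \<noteq> 0 \<Longrightarrow>
      ennreal (K * norm x powr (DIM('a) - \<beta> - \<alpha>)) \<le> riesz_conv \<alpha> (\<lambda>y. indicator (A R) y * norm y powr - \<beta>) x"
  obtains C where "C > 0"
    and "\<And>R u. R > 0 \<Longrightarrow> u \<in> borel_measurable lebesgue \<Longrightarrow>
      (\<integral>\<^sup>+x\<in>A R. ennreal (\<bar>u x\<bar> / norm x powr (\<alpha> + \<beta> - DIM('a))) \<partial>lebesgue)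
        \<le> ennreal (C * R powr (\<gamma> * (q-1) / q)) * Lq_norm_enn q (riesz_conv \<alpha> u)"
proof
  show "M powr ((q-1)/q) / K > 0"
    using M K by simp
  fix R :: real and u :: "'a \<Rightarrow> real"
  assume R: "R > 0" and u: "u \<in> borel_measurable lebesgue"
  have C: "(M * R powr \<gamma>) powr ((q-1)/q) / K = M powr ((q-1)/q) / K * R powr (\<gamma> * (q-1) / q)"
    using M R by (simp add: powr_mult powr_powr)
  show "(\<integral>\<^sup>+x\<in>A R. ennreal (\<bar>u x\<bar> / norm x powr (\<alpha> + \<beta> - DIM('a))) \<partial>lebesgue)
      \<le> ennreal (M powr ((q-1)/q) / K * R powr (\<gamma> * (q-1) / q)) * Lq_norm_enn q (riesz_conv \<alpha> u)"
    using riesz_weighted_bound_from_test_function[OF q K A u G[OF R] lower] unfolding C .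
qed

lemma powr_ge_powr_neg_abs:
  fixes b t s :: real
  assumes "1 \<le> b" "1/b \<le> t" "t \<le> b"
  shows "b powr - \<bar>s\<bar> \<le> t powr s"
proof -
  have t: "t > 0"
    using assms by (smt (verit) divide_pos_pos)
  have "- ln b \<le> ln t" "ln t \<le> ln b"
    using assms t by (auto simp: ln_div simp flip: ln_inverse inverse_eq_divide)
  then have "\<bar>s * ln t\<bar> \<le> \<bar>s\<bar> * ln b"
    unfolding abs_mult by (intro mult_left_mono) auto
  then have "- \<bar>s\<bar> * ln b \<le> s * ln t"
    by linarith
  then show ?thesis
    using assms t by (simp add: powr_def)
qed

lemma powr_ge_on_annulus:
  fixes r \<kappa> t s :: real
  assumes "r > 0" "1 \<le> \<kappa>" "r / \<kappa> \<le> t" "t \<le> \<kappa> * r"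
  shows "\<kappa> powr - \<bar>s\<bar> * r powr s \<le> t powr s"
proof -
  have "\<kappa> powr - \<bar>s\<bar> \<le> (t / r) powr s"
    using assms by (intro powr_ge_powr_neg_abs) (auto simp: field_simps)
  then have "\<kappa> powr - \<bar>s\<bar> * r powr s \<le> (t / r) powr s * r powr s"
    by (intro mult_right_mono) auto
  also have "\<dots> = t powr s"
    using assms(1) by (simp add: powr_divide)
  finally show ?thesis .
qed

lemma powr_le_on_annulus:
  fixes r \<kappa> t s :: real
  assumes "r > 0" "1 \<le> \<kappa>" "r / \<kappa> \<le> t" "t \<le> \<kappa> * r"
  shows "t powr s \<le> \<kappa> powr \<bar>s\<bar> * r powr s"
proof (rule inverse_le_imp_le)
  show "inverse (\<kappa> powr \<bar>s\<bar> * r powr s) \<le> inverse (t powr s)"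
    using powr_ge_on_annulus[OF assms, of "- s"] by (simp add: powr_minus)
  show "0 < \<kappa> powr \<bar>s\<bar> * r powr s"
    using assms by simp
qed

lemma powr_scaling_identity:
  fixes r D a c V \<alpha> \<beta> :: real
  assumes "r > 0" "D > 0"
  shows "c * r powr - \<beta> / (D * r) powr \<alpha> * (V * (a * r) ^ n)
       = c / D powr \<alpha> * V * a ^ n * r powr (real n - \<beta> - \<alpha>)"
proof -
  have "r powr (real n - \<beta> - \<alpha>) = r ^ n * r powr - \<beta> / r powr \<alpha>"
    using assms by (simp add: powr_diff powr_minus powr_add powr_realpow field_simps)
  then show ?thesis
    using assms by (simp add: powr_mult field_simps)
qed

lemma riesz_conv_ge_ball:
  fixes g :: "'a::euclidean_space \<Rightarrow> real"
  assumes "\<alpha> \<ge> 0" "L \<ge> 0" "\<rho> \<le> dist x c"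
    and L: "\<And>y. y \<in> ball c \<rho> \<Longrightarrow> L \<le> \<bar>g y\<bar>"
  shows "ennreal (L / (dist x c + \<rho>) powr \<alpha>) * emeasure lborel (ball c \<rho>) \<le> riesz_conv \<alpha> g x"
proof -
  have pointwise: "L / (dist x c + \<rho>) powr \<alpha> \<le> \<bar>g y\<bar> / norm (x - y) powr \<alpha>" if y: "y \<in> ball c \<rho>" for y
  proof -
    have "0 < norm (x - y)" "norm (x - y) \<le> dist x c + \<rho>"
      using y assms(3) dist_triangle[of x y c] by (auto simp: dist_norm norm_minus_commute)
    then show ?thesis
      using assms(1,2) L[OF y] by (intro frac_le powr_mono2) auto
  qed
  have "ennreal (L / (dist x c + \<rho>) powr \<alpha>) * emeasure lborel (ball c \<rho>)
      = (\<integral>\<^sup>+y. ennreal (L / (dist x c + \<rho>) powr \<alpha>) * indicator (ball c \<rho>) y \<partial>lborel)"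
    by (simp add: nn_integral_cmult_indicator)
  also have "\<dots> \<le> riesz_conv \<alpha> g x"
    unfolding riesz_conv_def nn_integral_completion
    by (intro nn_integral_mono) (auto simp: indicator_def intro!: ennreal_leI pointwise)
  finally show ?thesis .
qed

lemma riesz_conv_indicator_powr_ge:
  fixes x c :: "'a::euclidean_space" and A :: "'a set" and \<alpha> \<beta> a b \<kappa> :: real
  assumes "\<alpha> \<ge> 0" "x \<noteq> 0" "0 < a" "a \<le> b" "1 \<le> \<kappa>" and c: "dist x c = b * norm x"
    and annulus: "\<And>y. y \<in> ball c (a * norm x) \<Longrightarrow>
      y \<in> A \<and> norm x / \<kappa> \<le> norm y \<and> norm y \<le> \<kappa> * norm x"
  shows "ennreal (\<kappa> powr - \<bar>\<beta>\<bar> / (a + b) powr \<alpha> * unit_ball_vol DIM('a) * a ^ DIM('a)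
           * norm x powr (DIM('a) - \<beta> - \<alpha>))
      \<le> riesz_conv \<alpha> (\<lambda>y. indicator A y * norm y powr - \<beta>) x"
proof -
  define r where "r = norm x"
  have r: "r > 0"
    using assms(2) by (simp add: r_def)
  define L where "L = \<kappa> powr - \<bar>\<beta>\<bar> * r powr - \<beta>"
  have "ennreal (L / (dist x c + a * r) powr \<alpha>) * emeasure lborel (ball c (a * r))
      \<le> riesz_conv \<alpha> (\<lambda>y. indicator A y * norm y powr - \<beta>) x"
  proof (rule riesz_conv_ge_ball)
    show "a * r \<le> dist x c"
      using assms(4) r c by (simp add: r_def)
    fix y
    assume "y \<in> ball c (a * r)"
    then have "y \<in> A" "L \<le> norm y powr - \<beta>"
      using annulus[of y] powr_ge_on_annulus[OF r assms(5), of "norm y" "- \<beta>"] by (auto simp: L_def r_def)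
    then show "L \<le> \<bar>indicator A y * norm y powr - \<beta>\<bar>"
      by simp
  qed (use assms(1) in \<open>auto simp: L_def\<close>)
  also have "dist x c + a * r = (a + b) * r"
    using c by (simp add: r_def algebra_simps)
  also have "ennreal (L / ((a + b) * r) powr \<alpha>) * emeasure lborel (ball c (a * r))
      = ennreal (\<kappa> powr - \<bar>\<beta>\<bar> / (a + b) powr \<alpha> * unit_ball_vol DIM('a) * a ^ DIM('a)
          * norm x powr (DIM('a) - \<beta> - \<alpha>))"
    using powr_scaling_identity[OF r, of "a + b" "\<kappa> powr - \<bar>\<beta>\<bar>" \<beta> \<alpha> "unit_ball_vol DIM('a)" a "DIM('a)"]
      assms(3,4) r
    by (simp add: emeasure_ball L_def r_def mult.assoc flip: ennreal_mult)
  finally show ?thesis .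
qed

lemma riesz_conv_outside_ball_ge:
  fixes \<alpha> \<beta> :: real
  assumes "\<alpha> \<ge> 0"
  obtains K where "K > 0"
    and "\<And>R (x::'a::euclidean_space). x \<in> - ball 0 R \<Longrightarrow> x \<noteq> 0 \<Longrightarrow>
      ennreal (K * norm x powr (DIM('a) - \<beta> - \<alpha>))
        \<le> riesz_conv \<alpha> (\<lambda>y. indicator (- ball 0 R) y * norm y powr - \<beta>) x"
proof
  show "(5/2) powr - \<bar>\<beta>\<bar> / (3/2) powr \<alpha> * unit_ball_vol DIM('a) * (1/2) ^ DIM('a) > 0"
    by simp
  fix R :: real and x :: 'a
  assume R: "x \<in> - ball 0 R" and "x \<noteq> 0"
  have "dist x (2 *\<^sub>R x) = 1 * norm x" "dist 0 (2 *\<^sub>R x) = 2 * norm x"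
    by (simp_all only: dist_0_norm norm_scaleR) (simp_all add: dist_norm scaleR_2)
  moreover have "y \<in> - ball 0 R \<and> norm x / (5/2) \<le> norm y \<and> norm y \<le> 5/2 * norm x"
    if "y \<in> ball (2 *\<^sub>R x) (1/2 * norm x)" for y
    using that R calculation dist_triangle[of 0 y "2 *\<^sub>R x"] dist_triangle[of 0 "2 *\<^sub>R x" y]
    by (auto simp: dist_commute)
  ultimately show "ennreal ((5/2) powr - \<bar>\<beta>\<bar> / (3/2) powr \<alpha> * unit_ball_vol DIM('a) * (1/2) ^ DIM('a)
        * norm x powr (DIM('a) - \<beta> - \<alpha>))
      \<le> riesz_conv \<alpha> (\<lambda>y. indicator (- ball 0 R) y * norm y powr - \<beta>) x"
    using riesz_conv_indicator_powr_ge[OF assms \<open>x \<noteq> 0\<close>, of "1/2" 1 "5/2" "2 *\<^sub>R x" "- ball 0 R" \<beta>]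
    by simp
qed

lemma riesz_conv_inside_ball_ge:
  fixes \<alpha> \<beta> :: real
  assumes "\<alpha> \<ge> 0"
  obtains K where "K > 0"
    and "\<And>R (x::'a::euclidean_space). x \<in> ball 0 R \<Longrightarrow> x \<noteq> 0 \<Longrightarrow>
      ennreal (K * norm x powr (DIM('a) - \<beta> - \<alpha>))
        \<le> riesz_conv \<alpha> (\<lambda>y. indicator (ball 0 R) y * norm y powr - \<beta>) x"
proof
  show "4 powr - \<bar>\<beta>\<bar> / (3/4) powr \<alpha> * unit_ball_vol DIM('a) * (1/4) ^ DIM('a) > 0"
    by simp
  fix R :: real and x :: 'a
  assume x: "x \<in> ball 0 R" "x \<noteq> 0"
  have "x - (1/2) *\<^sub>R x = (1/2) *\<^sub>R x"
    using scaleR_diff_left[of 1 "1/2" x] by simp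
  then have "dist x ((1/2) *\<^sub>R x) = 1/2 * norm x" "dist 0 ((1/2) *\<^sub>R x) = 1/2 * norm x"
    by (simp_all add: dist_norm)
  moreover have "y \<in> ball 0 R \<and> norm x / 4 \<le> norm y \<and> norm y \<le> 4 * norm x"
    if "y \<in> ball ((1/2) *\<^sub>R x) (1/4 * norm x)" for y
    using that x calculation dist_triangle[of 0 y "(1/2) *\<^sub>R x"] dist_triangle[of 0 "(1/2) *\<^sub>R x" y]
    by (auto simp: dist_commute)
  ultimately show "ennreal (4 powr - \<bar>\<beta>\<bar> / (3/4) powr \<alpha> * unit_ball_vol DIM('a) * (1/4) ^ DIM('a)
        * norm x powr (DIM('a) - \<beta> - \<alpha>))
      \<le> riesz_conv \<alpha> (\<lambda>y. indicator (ball 0 R) y * norm y powr - \<beta>) x"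
    using riesz_conv_indicator_powr_ge[OF assms x(2), of "1/4" "1/2" 4 "(1/2) *\<^sub>R x" "ball 0 R" \<beta>]
    by simp
qed

lemma exists_dyadic_bracket:
  fixes t :: real
  assumes "1 \<le> t"
  shows "\<exists>k. 2 ^ k \<le> t \<and> t \<le> 2 ^ Suc k"
proof
  define k where "k = nat \<lfloor>log 2 t\<rfloor>"
  have "real k \<le> log 2 t" "log 2 t \<le> real k + 1"
    using assms by (simp_all add: k_def)
  then have "2 powr real k \<le> 2 powr log 2 t" "2 powr log 2 t \<le> 2 powr (real k + 1)"
    by simp_all
  then show "2 ^ k \<le> t \<and> t \<le> 2 ^ Suc k"
    using assms by (simp add: powr_realpow powr_add)
qed

lemma dyadic_shell_outside_ball:
  fixes y :: "'a::real_normed_vector"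
  assumes "R > 0" "R \<le> norm y" "s \<ge> 0"
  shows "\<exists>k. y \<in> cball 0 (R * 2 ^ Suc k) \<and> norm y powr - s \<le> (R * 2 ^ k) powr - s"
proof -
  obtain k where "2 ^ k \<le> norm y / R" "norm y / R \<le> 2 ^ Suc k"
    using exists_dyadic_bracket[of "norm y / R"] assms by auto
  then have "R * 2 ^ k \<le> norm y" "norm y \<le> R * 2 ^ Suc k"
    using assms(1) by (simp_all add: field_simps)
  then show ?thesis
    using assms by (intro exI[of _ k]) (auto intro: powr_mono2')
qed

lemma dyadic_shell_inside_ball:
  fixes y :: "'a::real_normed_vector"
  assumes "0 < norm y" "norm y < R"
  shows "\<exists>k. y \<in> cball 0 (R * (1/2) ^ k) \<and> norm y powr - s \<le> 2 powr \<bar>s\<bar> * (R * (1/2) ^ k) powr - s"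
proof -
  obtain k where "2 ^ k \<le> R / norm y" "R / norm y \<le> 2 ^ Suc k"
    using exists_dyadic_bracket[of "R / norm y"] assms by auto
  then have "R * (1/2) ^ k / 2 \<le> norm y" "norm y \<le> R * (1/2) ^ k"
    using assms by (simp_all add: field_simps)
  then show ?thesis
    using assms powr_le_on_annulus[of "R * (1/2) ^ k" 2 "norm y" "- s"] by (intro exI[of _ k]) auto
qed

lemma powr_mult_power:
  fixes a b e :: real
  assumes "a > 0" "b > 0"
  shows "(a * b ^ k) powr e = a powr e * (b powr e) ^ k"
  using assms by (simp add: powr_mult powr_realpow[symmetric] powr_powr mult.commute flip: powr_power)

lemma nn_integral_le_geometric_ball_cover:
  fixes f :: "'a::euclidean_space \<Rightarrow> ennreal"
  assumes cover: "\<And>y. f y \<noteq> 0 \<Longrightarrow> \<exists>k. y \<in> cball 0 (\<rho> k) \<and> f y \<le> ennreal (c k)"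
    and nonneg: "\<And>k. \<rho> k \<ge> 0" "\<And>k. c k \<ge> 0"
    and geometric: "\<And>k. c k * unit_ball_vol DIM('a) * \<rho> k ^ DIM('a) = K * r ^ k"
    and r: "0 \<le> r" "r < 1"
  shows "(\<integral>\<^sup>+y. f y \<partial>lborel) \<le> ennreal (K / (1 - r))"
proof -
  have "0 \<le> c 0 * unit_ball_vol DIM('a) * \<rho> 0 ^ DIM('a)"
    using nonneg by simp
  then have K: "K \<ge> 0"
    by (simp add: geometric)
  have "f y \<le> (\<Sum>k. ennreal (c k) * indicator (cball 0 (\<rho> k)) y)" for y
  proof (cases "f y = 0")
    case False
    then obtain k where "y \<in> cball 0 (\<rho> k)" "f y \<le> ennreal (c k)"
      using cover by blast
    then show ?thesis
      using sum_le_suminf[of "\<lambda>k. ennreal (c k) * indicator (cball 0 (\<rho> k)) y" "{k}"]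
      by simp
  qed simp
  then have "(\<integral>\<^sup>+y. f y \<partial>lborel) \<le> (\<integral>\<^sup>+y. (\<Sum>k. ennreal (c k) * indicator (cball (0::'a) (\<rho> k)) y) \<partial>lborel)"
    by (intro nn_integral_mono)
  also have "\<dots> = (\<Sum>k. \<integral>\<^sup>+y. ennreal (c k) * indicator (cball (0::'a) (\<rho> k)) y \<partial>lborel)"
    by (rule nn_integral_suminf) (measurable, simp add: borel_closed)
  also have "\<dots> = (\<Sum>k. ennreal (c k) * emeasure lborel (cball (0::'a) (\<rho> k)))"
    by (simp add: nn_integral_cmult_indicator)
  also have "\<dots> = (\<Sum>k. ennreal (K * r ^ k))"
    using nonneg by (simp add: emeasure_cball mult.assoc geometric[symmetric] flip: ennreal_mult)
  also have "\<dots> = ennreal (K / (1 - r))"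
    using r K by (simp add: suminf_ennreal2 suminf_mult suminf_geometric)
  finally show ?thesis .
qed

lemma nn_integral_powr_outside_ball:
  fixes s :: real
  assumes s: "s > DIM('a::euclidean_space)"
  obtains M where "M > 0"
    and "\<And>R. R > 0 \<Longrightarrow>
      (\<integral>\<^sup>+y\<in>- ball (0::'a) R. ennreal (norm y powr - s) \<partial>lborel) \<le> ennreal (M * R powr (DIM('a) - s))"
proof
  define d where "d = real DIM('a)"
  define r where "r = 2 powr (d - s)"
  have r: "0 \<le> r" "r < 1"
    using s by (simp_all add: r_def d_def powr_less_one)
  show "unit_ball_vol d * 2 ^ DIM('a) / (1 - r) > 0"
    using r by (simp add: d_def)
  fix R :: real
  assume R: "R > 0"
  have "(\<integral>\<^sup>+y\<in>- ball (0::'a) R. ennreal (norm y powr - s) \<partial>lborel)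
      \<le> ennreal (unit_ball_vol d * 2 ^ DIM('a) * R powr (d - s) / (1 - r))"
  proof (rule nn_integral_le_geometric_ball_cover[where \<rho> = "\<lambda>k. R * 2 ^ Suc k" and c = "\<lambda>k. (R * 2 ^ k) powr - s"])
    show "\<exists>k. y \<in> cball 0 (R * 2 ^ Suc k)
        \<and> ennreal (norm y powr - s) * indicator (- ball 0 R) y \<le> ennreal ((R * 2 ^ k) powr - s)"
      if "ennreal (norm y powr - s) * indicator (- ball 0 R) y \<noteq> 0" for y :: 'a
      using that dyadic_shell_outside_ball[OF R, of y s] s by (auto simp: indicator_def ennreal_leI)
    fix k
    have "(R * 2 ^ Suc k) ^ DIM('a) = 2 ^ DIM('a) * (R * 2 ^ k) powr d"
      using R by (simp add: d_def powr_realpow power_mult_distrib)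
    then have "(R * 2 ^ k) powr - s * (R * 2 ^ Suc k) ^ DIM('a) = 2 ^ DIM('a) * (R * 2 ^ k) powr (d - s)"
      by (simp add: powr_diff powr_minus divide_inverse)
    also have "(R * 2 ^ k) powr (d - s) = R powr (d - s) * r ^ k"
      using R by (simp add: r_def powr_mult_power)
    finally show "(R * 2 ^ k) powr - s * unit_ball_vol DIM('a) * (R * 2 ^ Suc k) ^ DIM('a)
        = unit_ball_vol d * 2 ^ DIM('a) * R powr (d - s) * r ^ k"
      by (simp add: d_def mult_ac)
  qed (use R r in auto)
  then show "(\<integral>\<^sup>+y\<in>- ball (0::'a) R. ennreal (norm y powr - s) \<partial>lborel)
      \<le> ennreal (unit_ball_vol d * 2 ^ DIM('a) / (1 - r) * R powr (DIM('a) - s))"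
    by (simp add: d_def)
qed

lemma nn_integral_powr_inside_ball:
  fixes s :: real
  assumes s: "s < DIM('a::euclidean_space)"
  obtains M where "M > 0"
    and "\<And>R. R > 0 \<Longrightarrow>
      (\<integral>\<^sup>+y\<in>ball (0::'a) R. ennreal (norm y powr - s) \<partial>lborel) \<le> ennreal (M * R powr (DIM('a) - s))"
proof
  define d where "d = real DIM('a)"
  define r where "r = (1/2) powr (d - s)"
  have r: "0 \<le> r" "r < 1"
    using s by (simp_all add: r_def d_def powr01_less_one)
  show "unit_ball_vol d * 2 powr \<bar>s\<bar> / (1 - r) > 0"
    using r by (simp add: d_def)
  fix R :: real
  assume R: "R > 0"
  define \<rho> where "\<rho> k = R * (1/2) ^ k" for k :: nat
  have \<rho>: "\<rho> k > 0" for k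
    using R by (simp add: \<rho>_def)
  have "(\<integral>\<^sup>+y\<in>ball (0::'a) R. ennreal (norm y powr - s) \<partial>lborel)
      \<le> ennreal (unit_ball_vol d * 2 powr \<bar>s\<bar> * R powr (d - s) / (1 - r))"
  proof (rule nn_integral_le_geometric_ball_cover[where \<rho> = \<rho> and c = "\<lambda>k. 2 powr \<bar>s\<bar> * \<rho> k powr - s"])
    show "\<exists>k. y \<in> cball 0 (\<rho> k)
        \<and> ennreal (norm y powr - s) * indicator (ball 0 R) y \<le> ennreal (2 powr \<bar>s\<bar> * \<rho> k powr - s)"
      if "ennreal (norm y powr - s) * indicator (ball 0 R) y \<noteq> 0" for y :: 'a
      using that dyadic_shell_inside_ball[of y R s]
      by (auto simp: \<rho>_def indicator_def ennreal_leI split: if_splits)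
    fix k
    have "\<rho> k ^ DIM('a) = \<rho> k powr d"
      using \<rho>[of k] by (simp add: d_def powr_realpow)
    then have "\<rho> k powr - s * \<rho> k ^ DIM('a) = \<rho> k powr (d - s)"
      by (simp add: powr_diff powr_minus divide_inverse)
    also have "\<rho> k powr (d - s) = R powr (d - s) * r ^ k"
      using R by (simp add: \<rho>_def r_def powr_mult_power)
    finally show "2 powr \<bar>s\<bar> * \<rho> k powr - s * unit_ball_vol DIM('a) * \<rho> k ^ DIM('a)
        = unit_ball_vol d * 2 powr \<bar>s\<bar> * R powr (d - s) * r ^ k"
      by (simp add: d_def mult_ac)
  qed (use \<rho> r less_imp_le in auto)
  then show "(\<integral>\<^sup>+y\<in>ball (0::'a) R. ennreal (norm y powr - s) \<partial>lborel)
      \<le> ennreal (unit_ball_vol d * 2 powr \<bar>s\<bar> / (1 - r) * R powr (DIM('a) - s))"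
    by (simp add: d_def)
qed

lemma riesz_weighted_bound_outside_ball:
  fixes q \<alpha> \<delta> :: real
  assumes q: "q > 1" and \<alpha>: "DIM('a::euclidean_space) / q < \<alpha>" and \<delta>: "\<delta> > 0"
  obtains C where "C > 0"
    and "\<And>R u. R > 0 \<Longrightarrow> u \<in> borel_measurable lebesgue \<Longrightarrow>
      (\<integral>\<^sup>+x\<in>- ball (0::'a) R. ennreal (\<bar>u x\<bar> / norm x powr (\<alpha> - DIM('a) / q + \<delta>)) \<partial>lebesgue)
        \<le> ennreal (C * R powr - \<delta>) * Lq_norm_enn q (riesz_conv \<alpha> u)"
proof -
  define \<beta> where "\<beta> = DIM('a) - DIM('a) / q + \<delta>"
  have \<beta>p: "\<beta> * (q/(q-1)) = DIM('a) + \<delta> * (q/(q-1))"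
    using q by (simp add: \<beta>_def field_simps)
  have "DIM('a) - \<beta> * (q/(q-1)) = - \<delta> * (q/(q-1))"
    unfolding \<beta>p by simp
  then have exponents: "\<alpha> + \<beta> - DIM('a) = \<alpha> - DIM('a) / q + \<delta>"
    "(DIM('a) - \<beta> * (q/(q-1))) * (q-1) / q = - \<delta>"
    using q by (simp_all add: \<beta>_def)
  have "\<alpha> \<ge> 0"
    using \<alpha> q by (smt (verit) divide_pos_pos of_nat_0_less_iff DIM_positive)
  obtain K where "K > 0" and lower: "\<And>R (x::'a). x \<in> - ball 0 R \<Longrightarrow> x \<noteq> 0 \<Longrightarrow>
      ennreal (K * norm x powr (DIM('a) - \<beta> - \<alpha>)) \<le> riesz_conv \<alpha> (\<lambda>y. indicator (- ball 0 R) y * norm y powr - \<beta>) x"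
    using riesz_conv_outside_ball_ge[where 'a='a, OF \<open>\<alpha> \<ge> 0\<close>, of \<beta>] by blast
  obtain M where "M > 0" and shell: "\<And>R. R > 0 \<Longrightarrow>
      (\<integral>\<^sup>+y\<in>- ball (0::'a) R. ennreal (norm y powr - (\<beta> * (q/(q-1)))) \<partial>lborel)
        \<le> ennreal (M * R powr (DIM('a) - \<beta> * (q/(q-1))))"
    using nn_integral_powr_outside_ball[where 'a='a, of "\<beta> * (q/(q-1))"] \<beta>p \<delta> q by auto
  obtain C where "C > 0" and bound: "\<And>R u. R > 0 \<Longrightarrow> u \<in> borel_measurable lebesgue \<Longrightarrow>
      (\<integral>\<^sup>+x\<in>- ball (0::'a) R. ennreal (\<bar>u x\<bar> / norm x powr (\<alpha> + \<beta> - DIM('a))) \<partial>lebesgue)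
        \<le> ennreal (C * R powr ((DIM('a) - \<beta> * (q/(q-1))) * (q-1) / q)) * Lq_norm_enn q (riesz_conv \<alpha> u)"
    using riesz_weighted_bound_from_test_functions[where A = "\<lambda>R. - ball 0 R", OF q \<open>K > 0\<close> \<open>M > 0\<close> _ shell lower]
    by auto
  show ?thesis
    using that[OF \<open>C > 0\<close>] bound unfolding exponents by blast
qed

lemma riesz_weighted_bound_inside_ball:
  fixes q \<alpha> \<delta> :: real
  assumes q: "q > 1" and \<alpha>: "DIM('a::euclidean_space) / q < \<alpha>" and \<delta>: "\<delta> > 0"
  obtains C where "C > 0"
    and "\<And>R u. R > 0 \<Longrightarrow> u \<in> borel_measurable lebesgue \<Longrightarrow>
      (\<integral>\<^sup>+x\<in>ball (0::'a) R. ennreal (\<bar>u x\<bar> / norm x powr (\<alpha> - DIM('a) / q - \<delta>)) \<partial>lebesgue)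
        \<le> ennreal (C * R powr \<delta>) * Lq_norm_enn q (riesz_conv \<alpha> u)"
proof -
  define \<beta> where "\<beta> = DIM('a) - DIM('a) / q - \<delta>"
  have \<beta>p: "\<beta> * (q/(q-1)) = DIM('a) - \<delta> * (q/(q-1))"
    using q by (simp add: \<beta>_def field_simps)
  have "DIM('a) - \<beta> * (q/(q-1)) = \<delta> * (q/(q-1))"
    unfolding \<beta>p by simp
  then have exponents: "\<alpha> + \<beta> - DIM('a) = \<alpha> - DIM('a) / q - \<delta>"
    "(DIM('a) - \<beta> * (q/(q-1))) * (q-1) / q = \<delta>"
    using q by (simp_all add: \<beta>_def)
  have "\<alpha> \<ge> 0"
    using \<alpha> q by (smt (verit) divide_pos_pos of_nat_0_less_iff DIM_positive)
  obtain K where "K > 0" and lower: "\<And>R (x::'a). x \<in> ball 0 R \<Longrightarrow> x \<noteq> 0 \<Longrightarrow>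
      ennreal (K * norm x powr (DIM('a) - \<beta> - \<alpha>)) \<le> riesz_conv \<alpha> (\<lambda>y. indicator (ball 0 R) y * norm y powr - \<beta>) x"
    using riesz_conv_inside_ball_ge[where 'a='a, OF \<open>\<alpha> \<ge> 0\<close>, of \<beta>] by blast
  obtain M where "M > 0" and shell: "\<And>R. R > 0 \<Longrightarrow>
      (\<integral>\<^sup>+y\<in>ball (0::'a) R. ennreal (norm y powr - (\<beta> * (q/(q-1)))) \<partial>lborel)
        \<le> ennreal (M * R powr (DIM('a) - \<beta> * (q/(q-1))))"
    using nn_integral_powr_inside_ball[where 'a='a, of "\<beta> * (q/(q-1))"] \<beta>p \<delta> q by auto
  obtain C where "C > 0" and bound: "\<And>R u. R > 0 \<Longrightarrow> u \<in> borel_measurable lebesgue \<Longrightarrow>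
      (\<integral>\<^sup>+x\<in>ball (0::'a) R. ennreal (\<bar>u x\<bar> / norm x powr (\<alpha> + \<beta> - DIM('a))) \<partial>lebesgue)
        \<le> ennreal (C * R powr ((DIM('a) - \<beta> * (q/(q-1))) * (q-1) / q)) * Lq_norm_enn q (riesz_conv \<alpha> u)"
    using riesz_weighted_bound_from_test_functions[where A = "\<lambda>R. ball 0 R", OF q \<open>K > 0\<close> \<open>M > 0\<close> _ shell lower]
    by auto
  show ?thesis
    using that[OF \<open>C > 0\<close>] bound unfolding exponents by blast
qed

theorem proposition2p2:
  fixes q \<alpha> \<delta> :: real
  assumes "q > 1" and "real DIM('a::euclidean_space) / q < \<alpha>" and "\<alpha> < real DIM('a)"
    and "\<delta> > 0"
  shows "\<exists>C>0. \<forall>R>0. \<forall>u :: 'a \<Rightarrow> real. u \<in> borel_measurable lebesgue \<longrightarrow>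
     (\<integral>\<^sup>+ x\<in>- ball 0 R. ennreal (\<bar>u x\<bar> / norm x powr (\<alpha> - real DIM('a) / q + \<delta>)) \<partial>lebesgue)
        \<le> ennreal (C / R powr \<delta>) * Lq_norm_enn q (riesz_conv \<alpha> u)
   \<and> (\<integral>\<^sup>+ x\<in>ball 0 R. ennreal (\<bar>u x\<bar> / norm x powr (\<alpha> - real DIM('a) / q - \<delta>)) \<partial>lebesgue)
        \<le> ennreal (C * R powr \<delta>) * Lq_norm_enn q (riesz_conv \<alpha> u)"
proof -
  obtain C\<^sub>1 where C\<^sub>1: "C\<^sub>1 > 0"
    and outside: "\<And>R u. R > 0 \<Longrightarrow> u \<in> borel_measurable lebesgue \<Longrightarrow>
      (\<integral>\<^sup>+x\<in>- ball (0::'a) R. ennreal (\<bar>u x\<bar> / norm x powr (\<alpha> - DIM('a) / q + \<delta>)) \<partial>lebesgue)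
        \<le> ennreal (C\<^sub>1 * R powr - \<delta>) * Lq_norm_enn q (riesz_conv \<alpha> u)"
    using riesz_weighted_bound_outside_ball[OF assms(1,2,4)] by blast
  obtain C\<^sub>2 where C\<^sub>2: "C\<^sub>2 > 0"
    and inside: "\<And>R u. R > 0 \<Longrightarrow> u \<in> borel_measurable lebesgue \<Longrightarrow>
      (\<integral>\<^sup>+x\<in>ball (0::'a) R. ennreal (\<bar>u x\<bar> / norm x powr (\<alpha> - DIM('a) / q - \<delta>)) \<partial>lebesgue)
        \<le> ennreal (C\<^sub>2 * R powr \<delta>) * Lq_norm_enn q (riesz_conv \<alpha> u)"
    using riesz_weighted_bound_inside_ball[OF assms(1,2,4)] by blast
  show ?thesis
  proof (intro exI[of _ "max C\<^sub>1 C\<^sub>2"] conjI allI impI)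
    fix R :: real and u :: "'a \<Rightarrow> real"
    assume R: "R > 0" and u: "u \<in> borel_measurable lebesgue"
    have "C\<^sub>1 * R powr - \<delta> \<le> max C\<^sub>1 C\<^sub>2 / R powr \<delta>" "C\<^sub>2 * R powr \<delta> \<le> max C\<^sub>1 C\<^sub>2 * R powr \<delta>"
      using R by (simp_all add: powr_minus_divide divide_right_mono mult_right_mono)
    then show "(\<integral>\<^sup>+x\<in>- ball 0 R. ennreal (\<bar>u x\<bar> / norm x powr (\<alpha> - real DIM('a) / q + \<delta>)) \<partial>lebesgue)
        \<le> ennreal (max C\<^sub>1 C\<^sub>2 / R powr \<delta>) * Lq_norm_enn q (riesz_conv \<alpha> u)"
      and "(\<integral>\<^sup>+x\<in>ball 0 R. ennreal (\<bar>u x\<bar> / norm x powr (\<alpha> - real DIM('a) / q - \<delta>)) \<partial>lebesgue)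
        \<le> ennreal (max C\<^sub>1 C\<^sub>2 * R powr \<delta>) * Lq_norm_enn q (riesz_conv \<alpha> u)"
      using outside[OF R u] inside[OF R u]
      by (auto elim!: order_trans intro!: mult_right_mono ennreal_leI)
  qed (use C\<^sub>1 in simp)
qed

end
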